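(* Let $(X,\mathbf h,\Lambda,\widetilde B)$ be a quantum seed, $i\in[1,n]$, and let $X'_i$ be the cluster variable of $\mu_i(X,\mathbf h,\Lambda,\widetilde B)$ in position $i$. For every positive integer $s$, $$(X'_i)^s=V^s_{b^i}\,X(s[-b^i]_+-se_i)\qquad\text{and}\qquad (X'_i)^s=W^s_{b^i}\,X(s[b^i]_+-se_i),$$ where $$V^s_{b^i}=\prod_{k=1}^s\Big(\sum_{l=0}^{d_i}q^{\frac{2k-1}{2}l\tilde d_id_i^{-1}}h_{i,l}\,X(l\beta^i)\Big),\qquad W^s_{b^i}=\prod_{k=1}^s\Big(\sum_{l=0}^{d_i}q^{\frac{1-2k}{2}l\tilde d_id_i^{-1}}h_{i,l}\,X(-l\beta^i)\Big).$$
   Context: Notation: $[a,b]=\{a,a+1,\dots,b\}$; $[x]_+=\max(x,0)$, applied entrywise to vectors; $e_1,\dots,e_m$ is the standard basis of $\mathbb Z^m$. Fix integers $m\ge n\ge 1$. A compatible pair $(\Lambda,\widetilde B)$ consists of an $m\times n$ integer matrix $\widetilde B=(b_{kl})$ and a skew-symmetric $m\times m$ integer matrix $\Lambda$ such that $\Lambda\widetilde B=-\begin{bmatrix}D\\0\end{bmatrix}$ for some $D=\mathrm{diag}(\tilde d_1,\dots,\tilde d_n)$ with all $\tilde d_k\in\mathbb Z_{>0}$. Write $\Lambda(a,b)=a^T\Lambda b$. Fix positive integers $d_1,\dots,d_n$ such that $d_k$ divides every entry of the $k$-th column $b^k$ of $\widetilde B$; $\beta^k=\frac1{d_k}b^k$.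 The quantum torus $\mathcal T(\Lambda)$ is the $\mathbb Z[q^{\pm1/2}]$-algebra with basis $\{X(c)\mid c\in\mathbb Z^m\}$ and multiplication $X(c)X(d)=q^{\frac12\Lambda(c,d)}X(c+d)$; $\mathcal F$ is its skew field of fractions, $X_k=X(e_k)$. For $k\in[1,n]$, $\mathbf h_k=(h_{k,0},\dots,h_{k,d_k})$ with $h_{k,r}\in\mathbb Z[q^{\pm1/2}]$, $h_{k,r}=h_{k,d_k-r}$, $h_{k,0}=h_{k,d_k}=1$. A quantum seed $(X,\mathbf h,\Lambda,\widetilde B)$ consists of these data and the map $X:c\mapsto X(c)$. Its mutation in direction $i$ has cluster variables $X'_k=X_k$ for $k\ne i$ and $X'_i=\sum_{r=0}^{d_i}h_{i,r}X(r[\beta^i]_++(d_i-r)[-\beta^i]_+-e_i)$. *)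

theory Defs
  imports Main "HOL-Library.Poly_Mapping"
begin

text \<open>Coefficient ring Z[q^{1/2}, q^{-1/2}]: Laurent polynomials in t = q^{1/2},
  realised as the group ring of (int,+) over int.  tpow a = t^a = q^{a/2}.\<close>
type_synonym lpoly = "int \<Rightarrow>\<^sub>0 int"

definition tpow :: "int \<Rightarrow> lpoly" where
  "tpow a = Poly_Mapping.single a 1"

text \<open>Integer vectors in Z^m are functions nat => int supported on {1..m}.\<close>
type_synonym vec = "nat \<Rightarrow> int"

definition unitv :: "nat \<Rightarrow> vec" where
  "unitv i = (\<lambda>k. if k = i then 1 else 0)"

definition vadd :: "vec \<Rightarrow> vec \<Rightarrow> vec" where
  "vadd c d = (\<lambda>k. c k + d k)"

definition vsub :: "vec \<Rightarrow> vec \<Rightarrow> vec" where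
  "vsub c d = (\<lambda>k. c k - d k)"

definition vsmult :: "int \<Rightarrow> vec \<Rightarrow> vec" where
  "vsmult a c = (\<lambda>k. a * c k)"

definition vneg :: "vec \<Rightarrow> vec" where
  "vneg c = (\<lambda>k. - c k)"

definition vpos :: "vec \<Rightarrow> vec" where
  "vpos c = (\<lambda>k. max (c k) 0)"

definition col :: "nat \<Rightarrow> (nat \<Rightarrow> nat \<Rightarrow> int) \<Rightarrow> nat \<Rightarrow> vec" where
  "col m B l = (\<lambda>k. if k \<in> {1..m} then B k l else 0)"

definition betav :: "nat \<Rightarrow> (nat \<Rightarrow> nat \<Rightarrow> int) \<Rightarrow> (nat \<Rightarrow> nat) \<Rightarrow> nat \<Rightarrow> vec" where
  "betav m B d l = (\<lambda>k. if k \<in> {1..m} then B k l div int (d l) else 0)"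

definition bil :: "nat \<Rightarrow> (nat \<Rightarrow> nat \<Rightarrow> int) \<Rightarrow> vec \<Rightarrow> vec \<Rightarrow> int" where
  "bil m L c d = (\<Sum>k\<in>{1..m}. \<Sum>l\<in>{1..m}. c k * L k l * d l)"

text \<open>Elements of the quantum torus T(Lambda): finite Z[q^{\<plusminus>1/2}]-linear combinations
  of the basis elements X(c), c in Z^m.\<close>
type_synonym qt = "vec \<Rightarrow>\<^sub>0 lpoly"

definition qX :: "vec \<Rightarrow> qt" where
  "qX c = Poly_Mapping.single c 1"

definition qscale :: "lpoly \<Rightarrow> qt \<Rightarrow> qt" where
  "qscale a f = (\<Sum>c\<in>Poly_Mapping.keys f. Poly_Mapping.single c (a * Poly_Mapping.lookup f c))"

text \<open>Multiplication of T(Lambda): X(c) X(d) = q^{Lambda(c,d)/2} X(c+d), extended bilinearly.\<close>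
definition qmult :: "nat \<Rightarrow> (nat \<Rightarrow> nat \<Rightarrow> int) \<Rightarrow> qt \<Rightarrow> qt \<Rightarrow> qt" where
  "qmult m L f g = (\<Sum>c\<in>Poly_Mapping.keys f. \<Sum>d\<in>Poly_Mapping.keys g.
      Poly_Mapping.single (vadd c d) (Poly_Mapping.lookup f c * Poly_Mapping.lookup g d * tpow (bil m L c d)))"

primrec qpow :: "nat \<Rightarrow> (nat \<Rightarrow> nat \<Rightarrow> int) \<Rightarrow> qt \<Rightarrow> nat \<Rightarrow> qt" where
  "qpow m L f 0 = qX (\<lambda>_. 0)"
| "qpow m L f (Suc s) = qmult m L (qpow m L f s) f"

primrec qprod :: "nat \<Rightarrow> (nat \<Rightarrow> nat \<Rightarrow> int) \<Rightarrow> (nat \<Rightarrow> qt) \<Rightarrow> nat \<Rightarrow> qt" where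
  "qprod m L A 0 = qX (\<lambda>_. 0)"
| "qprod m L A (Suc s) = qmult m L (qprod m L A s) (A (Suc s))"

definition compatible_pair ::
  "nat \<Rightarrow> nat \<Rightarrow> (nat \<Rightarrow> nat \<Rightarrow> int) \<Rightarrow> (nat \<Rightarrow> nat \<Rightarrow> int) \<Rightarrow> (nat \<Rightarrow> int) \<Rightarrow> bool" where
  "compatible_pair m n L B dt \<longleftrightarrow>
     (\<forall>k\<in>{1..m}. \<forall>l\<in>{1..m}. L k l = - L l k) \<and>
     (\<forall>k\<in>{1..n}. dt k > 0) \<and>
     (\<forall>k\<in>{1..m}. \<forall>l\<in>{1..n}. (\<Sum>j\<in>{1..m}. L k j * B j l) = (if k = l then - dt l else 0))"

definition quantum_seed ::
  "nat \<Rightarrow> nat \<Rightarrow> (nat \<Rightarrow> nat \<Rightarrow> int) \<Rightarrow> (nat \<Rightarrow> nat \<Rightarrow> int) \<Rightarrow> (nat \<Rightarrow> int)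
    \<Rightarrow> (nat \<Rightarrow> nat) \<Rightarrow> (nat \<Rightarrow> nat \<Rightarrow> lpoly) \<Rightarrow> bool" where
  "quantum_seed m n L B dt d h \<longleftrightarrow>
     1 \<le> n \<and> n \<le> m \<and> compatible_pair m n L B dt \<and>
     (\<forall>k\<in>{1..n}. d k > 0 \<and> (\<forall>j\<in>{1..m}. int (d k) dvd B j k)) \<and>
     (\<forall>k\<in>{1..n}. h k 0 = 1 \<and> h k (d k) = 1 \<and> (\<forall>r\<in>{0..d k}. h k r = h k (d k - r)))"

definition mut_var ::
  "nat \<Rightarrow> (nat \<Rightarrow> nat \<Rightarrow> int) \<Rightarrow> (nat \<Rightarrow> nat) \<Rightarrow> (nat \<Rightarrow> nat \<Rightarrow> lpoly) \<Rightarrow> nat \<Rightarrow> qt" where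
  "mut_var m B d h i = (\<Sum>r\<in>{0..d i}. qscale (h i r)
      (qX (vsub (vadd (vsmult (int r) (vpos (betav m B d i)))
                      (vsmult (int (d i - r)) (vpos (vneg (betav m B d i))))) (unitv i))))"

text \<open>V^s_{b^i} and W^s_{b^i}.  The exponent of q is ((2k-1)/2) l dt_i / d_i, i.e. the exponent
  of t = q^{1/2} is (2k-1) l (dt_i / d_i); dt_i / d_i is an integer under the hypotheses.\<close>
definition Vfac :: "nat \<Rightarrow> (nat \<Rightarrow> nat \<Rightarrow> int) \<Rightarrow> (nat \<Rightarrow> int) \<Rightarrow> (nat \<Rightarrow> nat)
    \<Rightarrow> (nat \<Rightarrow> nat \<Rightarrow> lpoly) \<Rightarrow> nat \<Rightarrow> nat \<Rightarrow> qt" where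
  "Vfac m B dt d h i k = (\<Sum>l\<in>{0..d i}.
     qscale (tpow ((2 * int k - 1) * int l * (dt i div int (d i))) * h i l)
            (qX (vsmult (int l) (betav m B d i))))"

definition Wfac :: "nat \<Rightarrow> (nat \<Rightarrow> nat \<Rightarrow> int) \<Rightarrow> (nat \<Rightarrow> int) \<Rightarrow> (nat \<Rightarrow> nat)
    \<Rightarrow> (nat \<Rightarrow> nat \<Rightarrow> lpoly) \<Rightarrow> nat \<Rightarrow> nat \<Rightarrow> qt" where
  "Wfac m B dt d h i k = (\<Sum>l\<in>{0..d i}.
     qscale (tpow ((1 - 2 * int k) * int l * (dt i div int (d i))) * h i l)
            (qX (vsmult (- int l) (betav m B d i))))"

definition Vs :: "nat \<Rightarrow> (nat \<Rightarrow> nat \<Rightarrow> int) \<Rightarrow> (nat \<Rightarrow> nat \<Rightarrow> int) \<Rightarrow> (nat \<Rightarrow> int) \<Rightarrow> (nat \<Rightarrow> nat)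
    \<Rightarrow> (nat \<Rightarrow> nat \<Rightarrow> lpoly) \<Rightarrow> nat \<Rightarrow> nat \<Rightarrow> qt" where
  "Vs m L B dt d h i s = qprod m L (Vfac m B dt d h i) s"

definition Ws :: "nat \<Rightarrow> (nat \<Rightarrow> nat \<Rightarrow> int) \<Rightarrow> (nat \<Rightarrow> nat \<Rightarrow> int) \<Rightarrow> (nat \<Rightarrow> int) \<Rightarrow> (nat \<Rightarrow> nat)
    \<Rightarrow> (nat \<Rightarrow> nat \<Rightarrow> lpoly) \<Rightarrow> nat \<Rightarrow> nat \<Rightarrow> qt" where
  "Ws m L B dt d h i s = qprod m L (Wfac m B dt d h i) s"

end

theory Submission
  imports Defs
begin

text \<open>Write beta = beta^i, b = b^i = d_i beta and v = [-b]_+ - e_i. Since [x]_+ - [-x]_+ = x,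
  every exponent of X'_i equals l beta + v, so X'_i = F_1 X(v) with
  F_k = sum_l q^((2k-1) l e / 2) h_l X(l beta). Compatibility gives Lambda(b, w) = dt_i w_i, hence
  b_i = 0, v_i = -1 and Lambda(beta, v) = -e with e = dt_i / d_i. Therefore X(sv) F_1 = F_(s+1) X(sv),
  and pushing the factors X(v) of (F_1 X(v))^s to the right gives V^s X(sv). Because h_i is
  palindromic, X'_i is unchanged when beta is replaced by -beta, and the same argument yields the
  W-form.\<close>

lemma tpow_add: "tpow a * tpow b = tpow (a + b)"
  by (simp add: tpow_def mult_single)

lemma tpow_zero [simp]: "tpow 0 = 1"
  by (simp add: tpow_def)

lemma qscale_qX: "qscale a (qX c) = Poly_Mapping.single c a"
  by (simp add: qscale_def qX_def)

lemma qmult_conv_sum: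
  assumes "finite S" "Poly_Mapping.keys f \<subseteq> S" "finite T" "Poly_Mapping.keys g \<subseteq> T"
  shows "qmult m L f g = (\<Sum>c\<in>S. \<Sum>d\<in>T. Poly_Mapping.single (vadd c d)
      (Poly_Mapping.lookup f c * Poly_Mapping.lookup g d * tpow (bil m L c d)))"
  unfolding qmult_def
  by (subst sum.mono_neutral_left[of S], (use assms in \<open>auto simp: in_keys_iff\<close>)[3],
      intro sum.cong refl sum.mono_neutral_left) (use assms in \<open>auto simp: in_keys_iff\<close>)

lemma qmult_add_left: "qmult m L (f + g) h = qmult m L f h + qmult m L g h"
proof -
  let ?S = "Poly_Mapping.keys f \<union> Poly_Mapping.keys g" and ?T = "Poly_Mapping.keys h"
  have "qmult m L (f + g) h = (\<Sum>c\<in>?S. \<Sum>d\<in>?T. Poly_Mapping.single (vadd c d)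
      (Poly_Mapping.lookup (f + g) c * Poly_Mapping.lookup h d * tpow (bil m L c d)))"
    by (rule qmult_conv_sum) (auto simp: keys_add)
  then show ?thesis
    by (simp add: qmult_conv_sum[of ?S f ?T h] qmult_conv_sum[of ?S g ?T h]
        lookup_add distrib_right single_add sum.distrib)
qed

lemma qmult_add_right: "qmult m L h (f + g) = qmult m L h f + qmult m L h g"
proof -
  let ?S = "Poly_Mapping.keys h" and ?T = "Poly_Mapping.keys f \<union> Poly_Mapping.keys g"
  have "qmult m L h (f + g) = (\<Sum>c\<in>?S. \<Sum>d\<in>?T. Poly_Mapping.single (vadd c d)
      (Poly_Mapping.lookup h c * Poly_Mapping.lookup (f + g) d * tpow (bil m L c d)))"
    by (rule qmult_conv_sum) (auto simp: keys_add)
  then show ?thesis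
    by (simp add: qmult_conv_sum[of ?S h ?T f] qmult_conv_sum[of ?S h ?T g]
        lookup_add distrib_left distrib_right single_add sum.distrib)
qed

lemma qmult_zero_left [simp]: "qmult m L 0 g = 0"
  by (simp add: qmult_def)

lemma qmult_zero_right [simp]: "qmult m L g 0 = 0"
  by (simp add: qmult_def)

lemma qmult_sum_left: "qmult m L (\<Sum>i\<in>I. F i) g = (\<Sum>i\<in>I. qmult m L (F i) g)"
  by (induction I rule: infinite_finite_induct) (auto simp: qmult_add_left)

lemma qmult_sum_right: "qmult m L g (\<Sum>i\<in>I. F i) = (\<Sum>i\<in>I. qmult m L g (F i))"
  by (induction I rule: infinite_finite_induct) (auto simp: qmult_add_right)

lemma qmult_single_left: "qmult m L (Poly_Mapping.single c a) g =
    (\<Sum>e\<in>Poly_Mapping.keys g. Poly_Mapping.single (vadd c e)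
      (a * Poly_Mapping.lookup g e * tpow (bil m L c e)))"
  by (subst qmult_conv_sum[of "{c}" _ "Poly_Mapping.keys g"]) auto

lemma qmult_single_right: "qmult m L g (Poly_Mapping.single c a) =
    (\<Sum>e\<in>Poly_Mapping.keys g. Poly_Mapping.single (vadd e c)
      (Poly_Mapping.lookup g e * a * tpow (bil m L e c)))"
  by (subst qmult_conv_sum[of "Poly_Mapping.keys g" _ "{c}"]) auto

lemma qmult_single_single: "qmult m L (Poly_Mapping.single c a) (Poly_Mapping.single e b) =
    Poly_Mapping.single (vadd c e) (a * b * tpow (bil m L c e))"
  by (subst qmult_conv_sum[of "{c}" _ "{e}"]) auto

lemma bil_add_left: "bil m L (vadd a b) c = bil m L a c + bil m L b c"
  by (simp add: bil_def vadd_def algebra_simps sum.distrib)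

lemma bil_add_right: "bil m L c (vadd a b) = bil m L c a + bil m L c b"
  by (simp add: bil_def vadd_def algebra_simps sum.distrib)

lemma bil_smult_left: "bil m L (vsmult k a) c = k * bil m L a c"
  by (simp add: bil_def vsmult_def algebra_simps sum_distrib_left)

lemma bil_smult_right: "bil m L c (vsmult k a) = k * bil m L c a"
  by (simp add: bil_def vsmult_def algebra_simps sum_distrib_left)

lemma bil_neg_left: "bil m L (vneg a) c = - bil m L a c"
  by (simp add: bil_def vneg_def sum_negf)

lemma bil_skew:
  assumes "\<forall>k\<in>{1..m}. \<forall>l\<in>{1..m}. L k l = - L l k"
  shows "bil m L a c = - bil m L c a"
proof -
  have "bil m L a c = (\<Sum>l\<in>{1..m}. \<Sum>k\<in>{1..m}. a k * L k l * c l)"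
    unfolding bil_def by (rule sum.swap)
  also have "\<dots> = (\<Sum>l\<in>{1..m}. \<Sum>k\<in>{1..m}. - (c l * L l k * a k))"
  proof (intro sum.cong refl)
    fix l k assume "l \<in> {1..m}" "k \<in> {1..m}"
    then have "L k l = - L l k" using assms by blast
    then show "a k * L k l * c l = - (c l * L l k * a k)" by simp
  qed
  finally show ?thesis
    by (simp add: bil_def sum_negf)
qed

lemma bil_self_eq_0:
  assumes "\<forall>k\<in>{1..m}. \<forall>l\<in>{1..m}. L k l = - L l k"
  shows "bil m L a a = 0"
  using bil_skew[OF assms, of a a] by linarith

lemma vadd_assoc: "vadd (vadd a b) c = vadd a (vadd b c)"
  by (simp add: vadd_def add.assoc)

lemma qmult_assoc: "qmult m L (qmult m L f g) h = qmult m L f (qmult m L g h)"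
proof -
  let ?f = "Poly_Mapping.lookup f" and ?g = "Poly_Mapping.lookup g" and ?h = "Poly_Mapping.lookup h"
  have "qmult m L (qmult m L f g) h =
      (\<Sum>c\<in>Poly_Mapping.keys f. \<Sum>d\<in>Poly_Mapping.keys g. \<Sum>e\<in>Poly_Mapping.keys h.
        Poly_Mapping.single (vadd (vadd c d) e)
          (?f c * ?g d * tpow (bil m L c d) * ?h e * tpow (bil m L (vadd c d) e)))"
    by (simp add: qmult_def[of m L f g] qmult_sum_left qmult_single_left)
  also have "\<dots> =
      (\<Sum>c\<in>Poly_Mapping.keys f. \<Sum>d\<in>Poly_Mapping.keys g. \<Sum>e\<in>Poly_Mapping.keys h.
        Poly_Mapping.single (vadd c (vadd d e))
          (?f c * (?g d * ?h e * tpow (bil m L d e)) * tpow (bil m L c (vadd d e))))"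
    by (intro sum.cong refl)
      (simp add: vadd_assoc bil_add_left bil_add_right mult_ac add_ac tpow_add)
  also have "\<dots> =
      (\<Sum>d\<in>Poly_Mapping.keys g. \<Sum>e\<in>Poly_Mapping.keys h. \<Sum>c\<in>Poly_Mapping.keys f.
        Poly_Mapping.single (vadd c (vadd d e))
          (?f c * (?g d * ?h e * tpow (bil m L d e)) * tpow (bil m L c (vadd d e))))"
    by (rule trans[OF sum.swap]) (rule sum.cong[OF refl], rule sum.swap)
  also have "\<dots> = qmult m L f (qmult m L g h)"
    by (simp add: qmult_def[of m L g h] qmult_sum_right qmult_single_right)
  finally show ?thesis .
qed

lemma qpow_eq_qprod_qmult_qX:
  assumes factor: "X' = qmult m L (F 1) (qX v)"
    and commute: "\<And>s. qmult m L (qX (vsmult (int s) v)) (F 1)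
                      = qmult m L (F (Suc s)) (qX (vsmult (int s) v))"
    and isotropic: "bil m L v v = 0"
  shows "qpow m L X' s = qmult m L (qprod m L F s) (qX (vsmult (int s) v))"
proof (induction s)
  case 0
  have "vsmult (int 0) v = (\<lambda>_. 0)"
    by (simp add: vsmult_def)
  then show ?case
    by (simp add: qX_def qmult_single_single bil_def vadd_def)
next
  case (Suc s)
  have "vadd (vsmult (int s) v) v = vsmult (int (Suc s)) v"
    by (simp add: vadd_def vsmult_def algebra_simps)
  then have qX_Suc: "qmult m L (qX (vsmult (int s) v)) (qX v) = qX (vsmult (int (Suc s)) v)"
    by (simp add: qX_def qmult_single_single bil_smult_left isotropic)
  have "qpow m L X' (Suc s) = qmult m L (qprod m L F s)
      (qmult m L (qmult m L (qX (vsmult (int s) v)) (F 1)) (qX v))"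
    using Suc factor by (simp add: qmult_assoc)
  also have "\<dots> = qmult m L (qprod m L F s)
      (qmult m L (F (Suc s)) (qmult m L (qX (vsmult (int s) v)) (qX v)))"
    by (simp only: commute qmult_assoc)
  also have "\<dots> = qmult m L (qprod m L F (Suc s)) (qX (vsmult (int (Suc s)) v))"
    by (simp add: qX_Suc qmult_assoc)
  finally show ?case .
qed

text \<open>The k-th factor of V^s (gamma = beta, e = dt_i / d_i) or of W^s (gamma = -beta,
  e = -dt_i / d_i).\<close>

definition twisted_sum :: "nat \<Rightarrow> (nat \<Rightarrow> lpoly) \<Rightarrow> vec \<Rightarrow> int \<Rightarrow> nat \<Rightarrow> qt" where
  "twisted_sum D p \<gamma> e k = (\<Sum>l\<in>{0..D}.
     Poly_Mapping.single (vsmult (int l) \<gamma>) (tpow ((2 * int k - 1) * int l * e) * p l))"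

lemma twisted_sum_1_qmult_qX:
  assumes "bil m L \<gamma> v = - e"
  shows "qmult m L (twisted_sum D p \<gamma> e 1) (qX v)
       = (\<Sum>l\<in>{0..D}. Poly_Mapping.single (vadd (vsmult (int l) \<gamma>) v) (p l))"
  unfolding twisted_sum_def qmult_sum_left qX_def qmult_single_single
proof (intro sum.cong refl)
  fix l
  have "tpow (int l * e) * tpow (int l * - e) = 1"
    by (simp add: tpow_add)
  then show "Poly_Mapping.single (vadd (vsmult (int l) \<gamma>) v)
      (tpow ((2 * int 1 - 1) * int l * e) * p l * 1 * tpow (bil m L (vsmult (int l) \<gamma>) v))
    = Poly_Mapping.single (vadd (vsmult (int l) \<gamma>) v) (p l)"
    using assms by (simp add: bil_smult_left mult.commute mult.left_commute)
qed

text \<open>Commuting X(sv) past X(l gamma) costs q^(sle), which turns the twist of F_1 into that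
  of F_(s+1).\<close>

lemma qX_qmult_twisted_sum_1:
  assumes skew: "\<forall>k\<in>{1..m}. \<forall>l\<in>{1..m}. L k l = - L l k"
    and "bil m L \<gamma> v = - e"
  shows "qmult m L (qX (vsmult (int s) v)) (twisted_sum D p \<gamma> e 1)
       = qmult m L (twisted_sum D p \<gamma> e (Suc s)) (qX (vsmult (int s) v))"
  unfolding twisted_sum_def qmult_sum_left qmult_sum_right qX_def qmult_single_single
proof (intro sum.cong refl)
  fix l
  have "bil m L v \<gamma> = e"
    using bil_skew[OF skew, of v \<gamma>] assms(2) by simp
  moreover have "vadd (vsmult (int s) v) (vsmult (int l) \<gamma>) = vadd (vsmult (int l) \<gamma>) (vsmult (int s) v)"
    by (simp add: vadd_def add.commute)
  ultimately show "Poly_Mapping.single (vadd (vsmult (int s) v) (vsmult (int l) \<gamma>))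
      (1 * (tpow ((2 * int 1 - 1) * int l * e) * p l) * tpow (bil m L (vsmult (int s) v) (vsmult (int l) \<gamma>)))
    = Poly_Mapping.single (vadd (vsmult (int l) \<gamma>) (vsmult (int s) v))
      (tpow ((2 * int (Suc s) - 1) * int l * e) * p l * 1 * tpow (bil m L (vsmult (int l) \<gamma>) (vsmult (int s) v)))"
    using assms(2) by (simp add: bil_smult_left bil_smult_right mult_ac tpow_add) (simp add: algebra_simps)
qed

lemma qpow_eq_qprod_twisted_sum:
  assumes "\<forall>k\<in>{1..m}. \<forall>l\<in>{1..m}. L k l = - L l k"
    and "bil m L \<gamma> v = - e"
  shows "qpow m L (\<Sum>l\<in>{0..D}. Poly_Mapping.single (vadd (vsmult (int l) \<gamma>) v) (p l)) s
       = qmult m L (qprod m L (twisted_sum D p \<gamma> e) s) (qX (vsmult (int s) v))"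
  by (rule qpow_eq_qprod_qmult_qX)
    (simp_all only: twisted_sum_1_qmult_qX[OF assms(2)] qX_qmult_twisted_sum_1[OF assms]
      bil_self_eq_0[OF assms(1)])

lemma bil_col_left:
  assumes cp: "compatible_pair m n L B dt" and i: "i \<in> {1..n}" and "n \<le> m"
  shows "bil m L (col m B i) w = dt i * w i"
proof -
  have skew: "\<forall>k\<in>{1..m}. \<forall>l\<in>{1..m}. L k l = - L l k"
    and rows: "\<forall>k\<in>{1..m}. (\<Sum>j\<in>{1..m}. L k j * B j i) = (if k = i then - dt i else 0)"
    using cp i unfolding compatible_pair_def by blast+
  have "bil m L w (col m B i) = (\<Sum>k\<in>{1..m}. \<Sum>l\<in>{1..m}. w k * (L k l * B l i))"
    unfolding bil_def col_def by (intro sum.cong refl) (simp add: mult.assoc)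
  also have "\<dots> = (\<Sum>k\<in>{1..m}. w k * (\<Sum>l\<in>{1..m}. L k l * B l i))"
    by (simp add: sum_distrib_left)
  also have "\<dots> = (\<Sum>k\<in>{1..m}. if k = i then - dt i * w i else 0)"
    using rows by (intro sum.cong refl) simp
  also have "\<dots> = - dt i * w i"
    using i \<open>n \<le> m\<close> by simp
  finally show ?thesis
    using bil_skew[OF skew, of "col m B i" w] by simp
qed

lemma col_diag_eq_0:
  assumes cp: "compatible_pair m n L B dt" and i: "i \<in> {1..n}" and "n \<le> m"
  shows "col m B i i = 0"
proof -
  have skew: "\<forall>k\<in>{1..m}. \<forall>l\<in>{1..m}. L k l = - L l k" and "dt i > 0"
    using cp i unfolding compatible_pair_def by blast+
  then show ?thesis
    using bil_col_left[OF assms, of "col m B i"] bil_self_eq_0[OF skew, of "col m B i"] by simp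
qed

lemma col_eq_vsmult_betav:
  assumes "\<forall>j\<in>{1..m}. int (d i) dvd B j i"
  shows "col m B i = vsmult (int (d i)) (betav m B d i)"
proof
  fix k
  show "col m B i k = vsmult (int (d i)) (betav m B d i) k"
    using assms by (cases "k \<in> {1..m}") (auto simp: col_def betav_def vsmult_def)
qed

lemma bil_betav_left:
  assumes seed: "quantum_seed m n L B dt d h" and i: "i \<in> {1..n}" and "w i = -1"
  shows "bil m L (betav m B d i) w = - (dt i div int (d i))"
proof -
  have "compatible_pair m n L B dt" "n \<le> m" "d i > 0" "\<forall>j\<in>{1..m}. int (d i) dvd B j i"
    using seed i unfolding quantum_seed_def by auto
  then have "dt i = int (d i) * - bil m L (betav m B d i) w"
    using bil_col_left[of m n L B dt i w] col_eq_vsmult_betav[of m d i B] bil_smult_left i \<open>w i = -1\<close>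
    by simp
  moreover have "int (d i) \<noteq> 0"
    using \<open>d i > 0\<close> by simp
  ultimately show ?thesis
    by (simp only: nonzero_mult_div_cancel_left[OF \<open>int (d i) \<noteq> 0\<close>] minus_minus)
qed

lemma max_exchange:
  fixes x :: int
  assumes "0 \<le> r" "r \<le> D"
  shows "r * max x 0 + (D - r) * max (- x) 0 = r * x + max (- (D * x)) 0"
proof (cases "x \<ge> 0")
  case True
  then show ?thesis
    using assms by (simp add: max_def)
next
  case False
  then have "D * x \<le> 0"
    using assms by (simp add: mult_nonneg_nonpos)
  then show ?thesis
    using False by (simp add: max_def algebra_simps)
qed

lemma sum_exchange_monomials:
  "(\<Sum>r\<in>{0..D}. Poly_Mapping.single
      (vsub (vadd (vsmult (int r) (vpos \<gamma>)) (vsmult (int (D - r)) (vpos (vneg \<gamma>)))) w) (p r))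
   = (\<Sum>r\<in>{0..D}. Poly_Mapping.single
      (vadd (vsmult (int r) \<gamma>) (vsub (vpos (vneg (vsmult (int D) \<gamma>))) w)) (p r))"
proof (intro sum.cong refl arg_cong2[where f = Poly_Mapping.single] ext)
  fix r k
  assume "r \<in> {0..D}"
  then show "vsub (vadd (vsmult (int r) (vpos \<gamma>)) (vsmult (int (D - r)) (vpos (vneg \<gamma>)))) w k
      = vadd (vsmult (int r) \<gamma>) (vsub (vpos (vneg (vsmult (int D) \<gamma>))) w) k"
    using max_exchange[of "int r" "int D" "\<gamma> k"]
    by (simp add: vadd_def vsub_def vsmult_def vpos_def vneg_def of_nat_diff)
qed

lemma sum_exchange_monomials_vneg:
  assumes "\<forall>r\<in>{0..D}. p r = p (D - r)"
  shows "(\<Sum>r\<in>{0..D}. Poly_Mapping.single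
      (vsub (vadd (vsmult (int r) (vpos \<gamma>)) (vsmult (int (D - r)) (vpos (vneg \<gamma>)))) w) (p r))
   = (\<Sum>r\<in>{0..D}. Poly_Mapping.single
      (vsub (vadd (vsmult (int r) (vpos (vneg \<gamma>))) (vsmult (int (D - r)) (vpos (vneg (vneg \<gamma>))))) w) (p r))"
  (is "?lhs = ?rhs")
proof -
  have "?lhs = (\<Sum>r\<in>{0..D}. Poly_Mapping.single
      (vsub (vadd (vsmult (int (D + 0 - r)) (vpos \<gamma>)) (vsmult (int (D - (D + 0 - r))) (vpos (vneg \<gamma>)))) w)
      (p (D + 0 - r)))"
    by (rule sum.atLeastAtMost_rev)
  also have "\<dots> = ?rhs"
  proof (intro sum.cong refl)
    fix r
    assume r: "r \<in> {0..D}"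
    have vneg_vneg: "vneg (vneg \<gamma>) = \<gamma>"
      by (simp add: vneg_def)
    have vadd_commute: "vadd a b = vadd b a" for a b
      by (simp add: vadd_def add.commute)
    have "p r = p (D - r)"
      using assms r by blast
    moreover have "D - (D - r) = r"
      using r by simp
    ultimately show "Poly_Mapping.single
        (vsub (vadd (vsmult (int (D + 0 - r)) (vpos \<gamma>)) (vsmult (int (D - (D + 0 - r))) (vpos (vneg \<gamma>)))) w)
        (p (D + 0 - r))
      = Poly_Mapping.single
        (vsub (vadd (vsmult (int r) (vpos (vneg \<gamma>))) (vsmult (int (D - r)) (vpos (vneg (vneg \<gamma>))))) w) (p r)"
      by (simp only: add_0_right vneg_vneg vadd_commute)
  qed
  finally show ?thesis .
qed

lemma Vfac_eq_twisted_sum: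
  "Vfac m B dt d h i = twisted_sum (d i) (h i) (betav m B d i) (dt i div int (d i))"
  by (simp add: fun_eq_iff Vfac_def twisted_sum_def qscale_qX)

lemma Wfac_eq_twisted_sum:
  "Wfac m B dt d h i = twisted_sum (d i) (h i) (vneg (betav m B d i)) (- (dt i div int (d i)))"
proof
  fix k
  have "vsmult (- int l) \<beta> = vsmult (int l) (vneg \<beta>)" for l \<beta>
    by (simp add: vsmult_def vneg_def)
  moreover have "(1 - 2 * int k) * l * c = (2 * int k - 1) * l * - c" for l c :: int
    by (simp add: algebra_simps)
  ultimately show "Wfac m B dt d h i k
      = twisted_sum (d i) (h i) (vneg (betav m B d i)) (- (dt i div int (d i))) k"
    by (simp add: Wfac_def twisted_sum_def qscale_qX)
qed

lemma qpow_mut_var_eq_Vs: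
  assumes seed: "quantum_seed m n L B dt d h" and i: "i \<in> {1..n}"
  shows "qpow m L (mut_var m B d h i) s
       = qmult m L (Vs m L B dt d h i s)
           (qX (vsub (vsmult (int s) (vpos (vneg (col m B i)))) (vsmult (int s) (unitv i))))"
proof -
  define \<beta> where "\<beta> = betav m B d i"
  define v where "v = vsub (vpos (vneg (col m B i))) (unitv i)"
  have cp: "compatible_pair m n L B dt" and "n \<le> m" and dvd: "\<forall>j\<in>{1..m}. int (d i) dvd B j i"
    using seed i unfolding quantum_seed_def by blast+
  then have skew: "\<forall>k\<in>{1..m}. \<forall>l\<in>{1..m}. L k l = - L l k"
    unfolding compatible_pair_def by blast
  have "v i = -1"
    using col_diag_eq_0[OF cp i \<open>n \<le> m\<close>] by (simp add: v_def vsub_def vpos_def vneg_def unitv_def)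
  then have bil_v: "bil m L \<beta> v = - (dt i div int (d i))"
    unfolding \<beta>_def by (rule bil_betav_left[OF seed i])
  have mut: "mut_var m B d h i
      = (\<Sum>l\<in>{0..d i}. Poly_Mapping.single (vadd (vsmult (int l) \<beta>) v) (h i l))"
    unfolding mut_var_def qscale_qX sum_exchange_monomials v_def \<beta>_def
      col_eq_vsmult_betav[of m d i B, OF dvd] ..
  have exponent: "vsub (vsmult (int s) (vpos (vneg (col m B i)))) (vsmult (int s) (unitv i))
      = vsmult (int s) v"
    by (simp add: v_def vsub_def vsmult_def algebra_simps)
  show ?thesis
    unfolding mut exponent Vs_def Vfac_eq_twisted_sum \<beta>_def[symmetric] by (rule qpow_eq_qprod_twisted_sum[OF skew bil_v])
qed

lemma qpow_mut_var_eq_Ws: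
  assumes seed: "quantum_seed m n L B dt d h" and i: "i \<in> {1..n}"
  shows "qpow m L (mut_var m B d h i) s
       = qmult m L (Ws m L B dt d h i s)
           (qX (vsub (vsmult (int s) (vpos (col m B i))) (vsmult (int s) (unitv i))))"
proof -
  define \<beta> where "\<beta> = betav m B d i"
  define u where "u = vsub (vpos (col m B i)) (unitv i)"
  have cp: "compatible_pair m n L B dt" and "n \<le> m" and dvd: "\<forall>j\<in>{1..m}. int (d i) dvd B j i"
    and hsym: "\<forall>r\<in>{0..d i}. h i r = h i (d i - r)"
    using seed i unfolding quantum_seed_def by blast+
  then have skew: "\<forall>k\<in>{1..m}. \<forall>l\<in>{1..m}. L k l = - L l k"
    unfolding compatible_pair_def by blast
  have "u i = -1"
    using col_diag_eq_0[OF cp i \<open>n \<le> m\<close>] by (simp add: u_def vsub_def vpos_def unitv_def)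
  then have bil_u: "bil m L (vneg \<beta>) u = - (- (dt i div int (d i)))"
    unfolding \<beta>_def bil_neg_left by (simp only: bil_betav_left[OF seed i])
  have col: "vneg (vsmult (int (d i)) (vneg \<beta>)) = col m B i"
    by (simp add: col_eq_vsmult_betav[of m d i B, OF dvd] \<beta>_def vneg_def vsmult_def)
  have "mut_var m B d h i = (\<Sum>r\<in>{0..d i}. Poly_Mapping.single (vsub
      (vadd (vsmult (int r) (vpos (vneg \<beta>))) (vsmult (int (d i - r)) (vpos (vneg (vneg \<beta>))))) (unitv i))
      (h i r))"
    unfolding mut_var_def qscale_qX \<beta>_def by (rule sum_exchange_monomials_vneg[OF hsym])
  also have "\<dots> = (\<Sum>l\<in>{0..d i}. Poly_Mapping.single (vadd (vsmult (int l) (vneg \<beta>)) u) (h i l))"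
    unfolding sum_exchange_monomials u_def col ..
  finally have mut: "mut_var m B d h i
      = (\<Sum>l\<in>{0..d i}. Poly_Mapping.single (vadd (vsmult (int l) (vneg \<beta>)) u) (h i l))" .
  have exponent: "vsub (vsmult (int s) (vpos (col m B i))) (vsmult (int s) (unitv i)) = vsmult (int s) u"
    by (simp add: u_def vsub_def vsmult_def algebra_simps)
  show ?thesis
    unfolding mut exponent Ws_def Wfac_eq_twisted_sum \<beta>_def[symmetric] by (rule qpow_eq_qprod_twisted_sum[OF skew bil_u])
qed

theorem lemma4p1:
  fixes m n :: nat and L B :: "nat \<Rightarrow> nat \<Rightarrow> int" and dt :: "nat \<Rightarrow> int"
    and d :: "nat \<Rightarrow> nat" and h :: "nat \<Rightarrow> nat \<Rightarrow> lpoly" and i s :: nat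
  assumes "quantum_seed m n L B dt d h"
    and "i \<in> {1..n}"
    and "s \<ge> 1"
  shows "qpow m L (mut_var m B d h i) s
           = qmult m L (Vs m L B dt d h i s)
               (qX (vsub (vsmult (int s) (vpos (vneg (col m B i)))) (vsmult (int s) (unitv i))))
       \<and> qpow m L (mut_var m B d h i) s
           = qmult m L (Ws m L B dt d h i s)
               (qX (vsub (vsmult (int s) (vpos (col m B i))) (vsmult (int s) (unitv i))))"
  \<comment> \<open>both identities hold for s = 0 as well\<close>
  using qpow_mut_var_eq_Vs[OF assms(1,2)] qpow_mut_var_eq_Ws[OF assms(1,2)] by blast

end
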